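(* Let $G$ and $H$ be two nontrivial connected graphs. For $\ast\in\{\boxtimes,\circ\}$, $C_{cc}(G\ast H)=\alpha(G\ast H)$.
   Context: All graphs are finite, simple and undirected. For a graph $G$ and $S\subseteq V(G)$, the cycle interval $\langle S\rangle$ consists of the vertices of $S$ together with every vertex $w\in V(G)\setminus S$ such that $G[S\cup\{w\}]$ contains a cycle through $w$; $S$ is cycle convex if $\langle S\rangle=S$. The cycle convexity number $C_{cc}(G)$ is the maximum cardinality of a proper (i.e. $\neq V(G)$) cycle convex subset of $V(G)$. $\alpha$ denotes the independence number. The strong product $G\boxtimes H$ has vertex set $V(G)\times V(H)$ with $(g_1,h_1)\sim(g_2,h_2)$ iff ($g_1\sim g_2$, $h_1=h_2$) or ($g_1=g_2$, $h_1\sim h_2$) or ($g_1\sim g_2$, $h_1\sim h_2$). The lexicographic product $G\circ H$ has vertex set $V(G)\times V(H)$ with $(g_1,h_1)\sim(g_2,h_2)$ iff $g_1\sim g_2$, or ($g_1=g_2$ and $h_1\sim h_2$). A graph is nontrivial if it has at least two vertices. *)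

theory Defs
  imports Main
begin

definition simple_graph :: "'a set \<Rightarrow> ('a \<Rightarrow> 'a \<Rightarrow> bool) \<Rightarrow> bool" where
  "simple_graph V E \<longleftrightarrow> finite V \<and> (\<forall>x y. E x y \<longrightarrow> x \<in> V \<and> y \<in> V)
     \<and> (\<forall>x y. E x y \<longrightarrow> E y x) \<and> (\<forall>x. \<not> E x x)"

definition connected_graph :: "'a set \<Rightarrow> ('a \<Rightarrow> 'a \<Rightarrow> bool) \<Rightarrow> bool" where
  "connected_graph V E \<longleftrightarrow> V \<noteq> {} \<and> (\<forall>u\<in>V. \<forall>v\<in>V. E\<^sup>*\<^sup>* u v)"

definition nontrivial_graph :: "'a set \<Rightarrow> bool" where
  "nontrivial_graph V \<longleftrightarrow> card V \<ge> 2"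

definition is_cycle :: "('a \<Rightarrow> 'a \<Rightarrow> bool) \<Rightarrow> 'a list \<Rightarrow> bool" where
  "is_cycle E cs \<longleftrightarrow> distinct cs \<and> length cs \<ge> 3
     \<and> (\<forall>i. Suc i < length cs \<longrightarrow> E (cs ! i) (cs ! Suc i))
     \<and> E (last cs) (hd cs)"

definition cycle_through :: "('a \<Rightarrow> 'a \<Rightarrow> bool) \<Rightarrow> 'a set \<Rightarrow> 'a \<Rightarrow> bool" where
  "cycle_through E T w \<longleftrightarrow> (\<exists>cs. is_cycle E cs \<and> set cs \<subseteq> T \<and> w \<in> set cs)"

definition cycle_interval :: "'a set \<Rightarrow> ('a \<Rightarrow> 'a \<Rightarrow> bool) \<Rightarrow> 'a set \<Rightarrow> 'a set" where
  "cycle_interval V E S = S \<union> {w \<in> V - S. cycle_through E (S \<union> {w}) w}"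

definition cycle_convex :: "'a set \<Rightarrow> ('a \<Rightarrow> 'a \<Rightarrow> bool) \<Rightarrow> 'a set \<Rightarrow> bool" where
  "cycle_convex V E S \<longleftrightarrow> S \<subseteq> V \<and> cycle_interval V E S = S"

definition cycle_convexity_number :: "'a set \<Rightarrow> ('a \<Rightarrow> 'a \<Rightarrow> bool) \<Rightarrow> nat" where
  "cycle_convexity_number V E =
     Max {card S | S. S \<subseteq> V \<and> S \<noteq> V \<and> cycle_convex V E S}"

definition independent_set :: "('a \<Rightarrow> 'a \<Rightarrow> bool) \<Rightarrow> 'a set \<Rightarrow> bool" where
  "independent_set E S \<longleftrightarrow> (\<forall>x\<in>S. \<forall>y\<in>S. \<not> E x y)"

definition independence_number :: "'a set \<Rightarrow> ('a \<Rightarrow> 'a \<Rightarrow> bool) \<Rightarrow> nat" where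
  "independence_number V E = Max {card S | S. S \<subseteq> V \<and> independent_set E S}"

definition strong_prod ::
  "'a set \<Rightarrow> ('a \<Rightarrow> 'a \<Rightarrow> bool) \<Rightarrow> 'b set \<Rightarrow> ('b \<Rightarrow> 'b \<Rightarrow> bool) \<Rightarrow> ('a \<times> 'b) \<Rightarrow> ('a \<times> 'b) \<Rightarrow> bool" where
  "strong_prod V1 E1 V2 E2 = (\<lambda>(g1, h1) (g2, h2).
     g1 \<in> V1 \<and> g2 \<in> V1 \<and> h1 \<in> V2 \<and> h2 \<in> V2 \<and>
     ((E1 g1 g2 \<and> h1 = h2) \<or> (g1 = g2 \<and> E2 h1 h2) \<or> (E1 g1 g2 \<and> E2 h1 h2)))"

definition lexicographic_prod ::
  "'a set \<Rightarrow> ('a \<Rightarrow> 'a \<Rightarrow> bool) \<Rightarrow> 'b set \<Rightarrow> ('b \<Rightarrow> 'b \<Rightarrow> bool) \<Rightarrow> ('a \<times> 'b) \<Rightarrow> ('a \<times> 'b) \<Rightarrow> bool" where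
  "lexicographic_prod V1 E1 V2 E2 = (\<lambda>(g1, h1) (g2, h2).
     g1 \<in> V1 \<and> g2 \<in> V1 \<and> h1 \<in> V2 \<and> h2 \<in> V2 \<and>
     (E1 g1 g2 \<or> (g1 = g2 \<and> E2 h1 h2)))"

end

theory Submission
  imports Defs
begin

(* Independent sets are cycle convex, and a maximum one is proper because the graph has an
   edge, so it suffices that every proper cycle convex set S is independent. Such an S is closed
   under completing triangles, since a triangle xyz with x, y in S is a cycle through z in S + z.
   In both products the neighbourhood of every vertex induces a connected subgraph (every
   neighbour of (g, h) reaches (g, b), for a fixed neighbour b of h, within two steps), so if S
   contains an edge xy it contains all neighbours of x, each of which again lies on an edge
   inside S; by connectivity S is the whole vertex set. *)

definition local_adj :: "('a \<Rightarrow> 'a \<Rightarrow> bool) \<Rightarrow> 'a \<Rightarrow> 'a \<Rightarrow> 'a \<Rightarrow> bool" where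
  "local_adj E x a b \<longleftrightarrow> E x a \<and> E x b \<and> E a b"

definition locally_connected :: "('a \<Rightarrow> 'a \<Rightarrow> bool) \<Rightarrow> bool" where
  "locally_connected E \<longleftrightarrow> (\<forall>x y z. E x y \<longrightarrow> E x z \<longrightarrow> (local_adj E x)\<^sup>*\<^sup>* y z)"

lemma independent_imp_cycle_convex:
  assumes "S \<subseteq> V" and indep: "independent_set E S"
  shows "cycle_convex V E S"
proof -
  have "\<not> cycle_through E (S \<union> {w}) w" if "w \<notin> S" for w
  proof
    assume "cycle_through E (S \<union> {w}) w"
    then obtain cs where cyc: "is_cycle E cs" and sub: "set cs \<subseteq> S \<union> {w}"
      unfolding cycle_through_def by blast
    let ?n = "length cs"
    have dist: "distinct cs" and len: "?n \<ge> 3"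
      and step: "\<And>i. Suc i < ?n \<Longrightarrow> E (cs ! i) (cs ! Suc i)"
      using cyc by (auto simp: is_cycle_def)
    have close: "E (cs ! (?n - 1)) (cs ! 0)"
      using cyc len by (simp add: is_cycle_def last_conv_nth hd_conv_nth flip: length_greater_0_conv)
    have incident: "cs ! i = w \<or> cs ! j = w" if "i < ?n" "j < ?n" "E (cs ! i) (cs ! j)" for i j
      using that sub indep nth_mem unfolding independent_set_def by blast
    \<comment> \<open>Every edge of the cycle meets w, but w lies on only two of its at least three edges.\<close>
    have idx: "0 < ?n" "1 < ?n" "2 < ?n" using len by auto
    have "E (cs ! 0) (cs ! 1)" "E (cs ! 1) (cs ! 2)"
      using step[of 0] step[of 1] idx by (simp_all add: numeral_2_eq_2)
    then have "cs ! 0 = w \<or> cs ! 1 = w" "cs ! 1 = w \<or> cs ! 2 = w"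
      using incident[OF idx(1,2)] incident[OF idx(2,3)] by blast+
    moreover have "cs ! 0 \<noteq> cs ! 2" using idx dist by (simp add: nth_eq_iff_index_eq)
    ultimately have "cs ! 1 = w" by auto
    moreover have "cs ! (?n - 1) \<noteq> cs ! 1" "cs ! 0 \<noteq> cs ! 1"
      using idx dist by (auto simp: nth_eq_iff_index_eq)
    ultimately show False using incident[OF _ idx(1) close] idx by auto
  qed
  then show ?thesis using assms(1) unfolding cycle_convex_def cycle_interval_def by auto
qed

lemma cycle_convex_triangle:
  assumes "simple_graph V E" "cycle_convex V E S"
    and "x \<in> S" "y \<in> S" "E x y" "E y z" "E z x"
  shows "z \<in> S"
proof (rule ccontr)
  assume "z \<notin> S"
  have "x \<noteq> y" "y \<noteq> z" "z \<noteq> x" using assms(1,5-7) unfolding simple_graph_def by auto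
  then have "is_cycle E [x, y, z]"
    using assms(5-7) by (auto simp: is_cycle_def less_Suc_eq)
  then have "cycle_through E (S \<union> {z}) z" using assms(3,4) unfolding cycle_through_def by force
  moreover have "z \<in> V" using assms(1,6) unfolding simple_graph_def by blast
  ultimately have "z \<in> cycle_interval V E S" using \<open>z \<notin> S\<close> unfolding cycle_interval_def by blast
  with assms(2) \<open>z \<notin> S\<close> show False unfolding cycle_convex_def by blast
qed

lemma cycle_convex_adj_closed:
  assumes "simple_graph V E" "locally_connected E" "cycle_convex V E S"
    and "x \<in> S" "y \<in> S" "E x y" "E x z"
  shows "z \<in> S"
proof -
  have "(local_adj E x)\<^sup>*\<^sup>* y z" using assms(2,6,7) unfolding locally_connected_def by blast
  then show ?thesis
  proof (induction rule: rtranclp_induct)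
    case base
    show ?case by fact
  next
    case (step a b)
    then have "E x a" "E a b" "E b x" using assms(1) unfolding local_adj_def simple_graph_def by auto
    with step.IH show ?case using cycle_convex_triangle[OF assms(1,3,4)] by blast
  qed
qed

lemma cycle_convex_adj_imp_eq:
  assumes "simple_graph V E" "connected_graph V E" "locally_connected E" "cycle_convex V E S"
    and "x \<in> S" "y \<in> S" "E x y"
  shows "S = V"
proof
  show "S \<subseteq> V" using assms(4) unfolding cycle_convex_def by blast
  show "V \<subseteq> S"
  proof
    fix v assume "v \<in> V"
    moreover have "x \<in> V" using assms(1,7) unfolding simple_graph_def by blast
    ultimately have "E\<^sup>*\<^sup>* x v" using assms(2) unfolding connected_graph_def by blast
    then have "v \<in> S \<and> (\<exists>u\<in>S. E v u)"
    proof (induction rule: rtranclp_induct)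
      case base
      show ?case using assms(5-7) by blast
    next
      case (step w z)
      then have "z \<in> S" using cycle_convex_adj_closed[OF assms(1,3,4)] by blast
      moreover have "E z w" using step(2) assms(1) unfolding simple_graph_def by blast
      ultimately show ?case using step.IH by blast
    qed
    then show "v \<in> S" ..
  qed
qed

lemma connected_graph_ex_adj:
  assumes "connected_graph V E" "nontrivial_graph V" "g \<in> V"
  shows "\<exists>a. E g a"
proof -
  have "V \<noteq> {g}" using assms(2) unfolding nontrivial_graph_def by auto
  then obtain g' where "g' \<in> V" "g' \<noteq> g" using assms(3) by blast
  then have "E\<^sup>*\<^sup>* g g'" using assms(1,3) unfolding connected_graph_def by blast
  with \<open>g' \<noteq> g\<close> show ?thesis by (metis converse_rtranclpE)
qed

lemma proper_cycle_convex_iff_independent: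
  assumes "simple_graph V E" "connected_graph V E" "nontrivial_graph V" "locally_connected E"
    and "S \<subseteq> V"
  shows "S \<noteq> V \<and> cycle_convex V E S \<longleftrightarrow> independent_set E S"
proof
  assume "S \<noteq> V \<and> cycle_convex V E S"
  then show "independent_set E S"
    using cycle_convex_adj_imp_eq[OF assms(1,2,4)] unfolding independent_set_def by blast
next
  assume indep: "independent_set E S"
  obtain g where "g \<in> V" using assms(2) unfolding connected_graph_def by blast
  then obtain a where "E g a" using connected_graph_ex_adj[OF assms(2,3)] by blast
  moreover have "a \<in> V" using \<open>E g a\<close> assms(1) unfolding simple_graph_def by blast
  ultimately have "S \<noteq> V" using indep \<open>g \<in> V\<close> unfolding independent_set_def by blast
  then show "S \<noteq> V \<and> cycle_convex V E S" using independent_imp_cycle_convex[OF assms(5) indep] by blast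
qed

lemma cycle_convexity_number_eq_independence_number:
  assumes "simple_graph V E" "connected_graph V E" "nontrivial_graph V" "locally_connected E"
  shows "cycle_convexity_number V E = independence_number V E"
proof -
  have "S \<subseteq> V \<and> S \<noteq> V \<and> cycle_convex V E S \<longleftrightarrow> S \<subseteq> V \<and> independent_set E S" for S
    using proper_cycle_convex_iff_independent[OF assms] by blast
  then show ?thesis unfolding cycle_convexity_number_def independence_number_def by (simp only:)
qed

lemma locally_connectedI:
  assumes sym: "\<And>a b. E a b \<Longrightarrow> E b a"
    and hub: "\<And>x. \<exists>c. \<forall>y. E x y \<longrightarrow> (local_adj E x)\<^sup>*\<^sup>* y c"
  shows "locally_connected E"
  unfolding locally_connected_def
proof (intro allI impI)
  fix x y z assume "E x y" "E x z"
  obtain c where c: "\<And>y. E x y \<Longrightarrow> (local_adj E x)\<^sup>*\<^sup>* y c" using hub by blast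
  have "symp (local_adj E x)" using sym by (auto simp: symp_def local_adj_def)
  then have "(local_adj E x)\<^sup>*\<^sup>* c z" using c[OF \<open>E x z\<close>] by (metis sympD symp_rtranclp)
  with c[OF \<open>E x y\<close>] show "(local_adj E x)\<^sup>*\<^sup>* y z" by (rule rtranclp_trans)
qed

lemma simple_graph_strong_prod:
  assumes "simple_graph V1 E1" "simple_graph V2 E2"
  shows "simple_graph (V1 \<times> V2) (strong_prod V1 E1 V2 E2)"
  using assms finite_cartesian_product unfolding simple_graph_def strong_prod_def by fastforce

lemma simple_graph_lexicographic_prod:
  assumes "simple_graph V1 E1" "simple_graph V2 E2"
  shows "simple_graph (V1 \<times> V2) (lexicographic_prod V1 E1 V2 E2)"
  using assms finite_cartesian_product unfolding simple_graph_def lexicographic_prod_def by fastforce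

lemma nontrivial_graph_prod:
  assumes "nontrivial_graph V1" "nontrivial_graph V2"
  shows "nontrivial_graph (V1 \<times> V2)"
proof -
  have "2 * 2 \<le> card V1 * card V2" using assms unfolding nontrivial_graph_def by (intro mult_mono) auto
  then show ?thesis unfolding nontrivial_graph_def by (simp add: card_cartesian_product)
qed

lemma connected_graph_prodI:
  assumes "connected_graph V1 E1" "connected_graph V2 E2"
    and horizontal: "\<And>g g' h. E1 g g' \<Longrightarrow> h \<in> V2 \<Longrightarrow> E (g, h) (g', h)"
    and vertical: "\<And>g h h'. E2 h h' \<Longrightarrow> g \<in> V1 \<Longrightarrow> E (g, h) (g, h')"
  shows "connected_graph (V1 \<times> V2) E"
  unfolding connected_graph_def
proof (intro conjI ballI)
  show "V1 \<times> V2 \<noteq> {}" using assms(1,2) unfolding connected_graph_def by blast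
next
  fix u v assume "u \<in> V1 \<times> V2" "v \<in> V1 \<times> V2"
  then obtain g h g' h' where uv: "u = (g, h)" "v = (g', h')" "h \<in> V2" "g' \<in> V1" by auto
  have "E1\<^sup>*\<^sup>* g g'" "E2\<^sup>*\<^sup>* h h'"
    using assms(1,2) \<open>u \<in> V1 \<times> V2\<close> \<open>v \<in> V1 \<times> V2\<close> uv unfolding connected_graph_def by auto
  have "E\<^sup>*\<^sup>* (g, h) (g', h)" using \<open>E1\<^sup>*\<^sup>* g g'\<close>
    by (induction rule: rtranclp_induct) (use horizontal uv in \<open>blast intro: rtranclp.rtrancl_into_rtrancl\<close>)+
  moreover have "E\<^sup>*\<^sup>* (g', h) (g', h')" using \<open>E2\<^sup>*\<^sup>* h h'\<close>
    by (induction rule: rtranclp_induct) (use vertical uv in \<open>blast intro: rtranclp.rtrancl_into_rtrancl\<close>)+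
  ultimately show "E\<^sup>*\<^sup>* u v" using uv by (metis rtranclp_trans)
qed

lemma connected_graph_strong_prod:
  assumes "simple_graph V1 E1" "connected_graph V1 E1" "simple_graph V2 E2" "connected_graph V2 E2"
  shows "connected_graph (V1 \<times> V2) (strong_prod V1 E1 V2 E2)"
  using assms(1,3) by (intro connected_graph_prodI[OF assms(2,4)]) (auto simp: strong_prod_def simple_graph_def)

lemma connected_graph_lexicographic_prod:
  assumes "simple_graph V1 E1" "connected_graph V1 E1" "simple_graph V2 E2" "connected_graph V2 E2"
  shows "connected_graph (V1 \<times> V2) (lexicographic_prod V1 E1 V2 E2)"
  using assms(1,3) by (intro connected_graph_prodI[OF assms(2,4)]) (auto simp: lexicographic_prod_def simple_graph_def)

lemma locally_connected_strong_prod: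
  assumes "simple_graph V1 E1" "simple_graph V2 E2"
    and adj1: "\<And>g. g \<in> V1 \<Longrightarrow> \<exists>a. E1 g a" and adj2: "\<And>h. h \<in> V2 \<Longrightarrow> \<exists>b. E2 h b"
  shows "locally_connected (strong_prod V1 E1 V2 E2)"
proof (rule locally_connectedI)
  let ?P = "strong_prod V1 E1 V2 E2"
  have sym1: "\<And>a b. E1 a b \<Longrightarrow> E1 b a" and in1: "\<And>a b. E1 a b \<Longrightarrow> a \<in> V1 \<and> b \<in> V1"
    and sym2: "\<And>a b. E2 a b \<Longrightarrow> E2 b a" and in2: "\<And>a b. E2 a b \<Longrightarrow> a \<in> V2 \<and> b \<in> V2"
    using assms(1,2) unfolding simple_graph_def by blast+
  show "?P y x" if "?P x y" for x y
    using simple_graph_strong_prod[OF assms(1,2)] that unfolding simple_graph_def by blast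
  fix x :: "'a \<times> 'b"
  obtain g h where x: "x = (g, h)" by fastforce
  let ?hub = "(g, SOME b. E2 h b)"
  show "\<exists>c. \<forall>y. ?P x y \<longrightarrow> (local_adj ?P x)\<^sup>*\<^sup>* y c"
  proof (intro exI[of _ ?hub] allI impI)
    fix y assume "?P x y"
    then have "g \<in> V1" "h \<in> V2" using x by (auto simp: strong_prod_def)
    then obtain a0 where a0: "E1 g a0" and b0: "E2 h (SOME b. E2 h b)"
      using adj1 adj2 by (meson someI_ex)
    have to_hub: "local_adj ?P x (a, h) ?hub" if "E1 g a" for a
      using that b0 x in1 in2 sym1 unfolding local_adj_def strong_prod_def by auto
    have "(local_adj ?P x)\<^sup>*\<^sup>* (g, b) ?hub" if "E2 h b" for b
    proof -
      have "local_adj ?P x (g, b) (a0, h)"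
        using that a0 x in1 in2 sym2 unfolding local_adj_def strong_prod_def by auto
      then show ?thesis using to_hub[OF a0] by (meson converse_rtranclp_into_rtranclp r_into_rtranclp)
    qed
    moreover have "(local_adj ?P x)\<^sup>*\<^sup>* (a, b) ?hub" if "E1 g a" "E2 h b" for a b
    proof -
      have "local_adj ?P x (a, b) (a, h)"
        using that x in1 in2 sym2 unfolding local_adj_def strong_prod_def by auto
      then show ?thesis using to_hub[OF that(1)] by (meson converse_rtranclp_into_rtranclp r_into_rtranclp)
    qed
    moreover obtain gy hy where "y = (gy, hy)" by fastforce
    ultimately show "(local_adj ?P x)\<^sup>*\<^sup>* y ?hub"
      using \<open>?P x y\<close> to_hub x unfolding strong_prod_def by auto
  qed
qed

lemma locally_connected_lexicographic_prod:
  assumes "simple_graph V1 E1" "simple_graph V2 E2"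
    and adj1: "\<And>g. g \<in> V1 \<Longrightarrow> \<exists>a. E1 g a" and adj2: "\<And>h. h \<in> V2 \<Longrightarrow> \<exists>b. E2 h b"
  shows "locally_connected (lexicographic_prod V1 E1 V2 E2)"
proof (rule locally_connectedI)
  let ?P = "lexicographic_prod V1 E1 V2 E2"
  have sym1: "\<And>a b. E1 a b \<Longrightarrow> E1 b a" and in1: "\<And>a b. E1 a b \<Longrightarrow> a \<in> V1 \<and> b \<in> V1"
    and in2: "\<And>a b. E2 a b \<Longrightarrow> a \<in> V2 \<and> b \<in> V2"
    using assms(1,2) unfolding simple_graph_def by blast+
  show "?P y x" if "?P x y" for x y
    using simple_graph_lexicographic_prod[OF assms(1,2)] that unfolding simple_graph_def by blast
  fix x :: "'a \<times> 'b"
  obtain g h where x: "x = (g, h)" by fastforce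
  let ?hub = "(g, SOME b. E2 h b)"
  show "\<exists>c. \<forall>y. ?P x y \<longrightarrow> (local_adj ?P x)\<^sup>*\<^sup>* y c"
  proof (intro exI[of _ ?hub] allI impI)
    fix y assume "?P x y"
    then have "g \<in> V1" "h \<in> V2" using x by (auto simp: lexicographic_prod_def)
    then obtain a0 where a0: "E1 g a0" and b0: "E2 h (SOME b. E2 h b)"
      using adj1 adj2 by (meson someI_ex)
    have to_hub: "local_adj ?P x (a, c) ?hub" if "E1 g a" "c \<in> V2" for a c
      using that b0 x in1 in2 sym1 unfolding local_adj_def lexicographic_prod_def by auto
    have "(local_adj ?P x)\<^sup>*\<^sup>* (g, b) ?hub" if "E2 h b" for b
    proof -
      have "local_adj ?P x (g, b) (a0, h)"
        using that a0 x in1 in2 unfolding local_adj_def lexicographic_prod_def by auto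
      then show ?thesis using to_hub[OF a0 \<open>h \<in> V2\<close>] by (meson converse_rtranclp_into_rtranclp r_into_rtranclp)
    qed
    moreover obtain gy hy where "y = (gy, hy)" by fastforce
    ultimately show "(local_adj ?P x)\<^sup>*\<^sup>* y ?hub"
      using \<open>?P x y\<close> to_hub x unfolding lexicographic_prod_def by auto
  qed
qed

theorem mainTheorem14:
  fixes V1 :: "'a set" and E1 :: "'a \<Rightarrow> 'a \<Rightarrow> bool"
    and V2 :: "'b set" and E2 :: "'b \<Rightarrow> 'b \<Rightarrow> bool"
  assumes "simple_graph V1 E1" and "connected_graph V1 E1" and "nontrivial_graph V1"
    and "simple_graph V2 E2" and "connected_graph V2 E2" and "nontrivial_graph V2"
  shows "cycle_convexity_number (V1 \<times> V2) (strong_prod V1 E1 V2 E2)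
           = independence_number (V1 \<times> V2) (strong_prod V1 E1 V2 E2)
       \<and> cycle_convexity_number (V1 \<times> V2) (lexicographic_prod V1 E1 V2 E2)
           = independence_number (V1 \<times> V2) (lexicographic_prod V1 E1 V2 E2)"
proof -
  have adj1: "\<And>g. g \<in> V1 \<Longrightarrow> \<exists>a. E1 g a" by (rule connected_graph_ex_adj[OF assms(2,3)])
  have adj2: "\<And>h. h \<in> V2 \<Longrightarrow> \<exists>b. E2 h b" by (rule connected_graph_ex_adj[OF assms(5,6)])
  have nontrivial: "nontrivial_graph (V1 \<times> V2)" by (rule nontrivial_graph_prod[OF assms(3,6)])
  show ?thesis
  proof
    show "cycle_convexity_number (V1 \<times> V2) (strong_prod V1 E1 V2 E2)
        = independence_number (V1 \<times> V2) (strong_prod V1 E1 V2 E2)"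
      by (rule cycle_convexity_number_eq_independence_number[OF
            simple_graph_strong_prod[OF assms(1,4)] connected_graph_strong_prod[OF assms(1,2,4,5)]
            nontrivial locally_connected_strong_prod[OF assms(1,4) adj1 adj2]])
    show "cycle_convexity_number (V1 \<times> V2) (lexicographic_prod V1 E1 V2 E2)
        = independence_number (V1 \<times> V2) (lexicographic_prod V1 E1 V2 E2)"
      by (rule cycle_convexity_number_eq_independence_number[OF
            simple_graph_lexicographic_prod[OF assms(1,4)] connected_graph_lexicographic_prod[OF assms(1,2,4,5)]
            nontrivial locally_connected_lexicographic_prod[OF assms(1,4) adj1 adj2]])
  qed
qed

end
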